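(* Let $D=(V(D),A(D),w)$ be a weighted digraph and let $G=UG(D)$ be its weighted underlying graph. (a) Suppose $|V(D)|\ge 2$ and let $k$ be the minimum of $w(X,Y)$ over all partitions $(X,Y)$ of $V(D)$ into two nonempty parts. Then $r^+(D)+k\le \mathrm{mac}(D)$. (b) $\frac{\mathrm{mac}(G)}{2}\le \mathrm{mac}(D)\le \frac{\mathrm{mac}(G)+r^+(D)}{2}$. (c) $\frac{\mathrm{mac}(G)/2+r^+(D)}{2}\le \mathrm{mac}(D)\le \frac{\mathrm{mac}(G)+r^+(D)}{2}$. (d) Let $\chi$ be the chromatic number of $G$. If $\chi$ is even then $\left(\frac14+\frac{1}{4(\chi-1)}\right)w(D)\le \mathrm{mac}(D)$, and if $\chi$ is odd then $\left(\frac14+\frac{1}{4\chi}\right)w(D)\le\mathrm{mac}(D)$.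
   Context: A weighted digraph $D=(V(D),A(D),w)$ is a digraph without loops or parallel arcs (a pair of opposite arcs $xy,yx$ is allowed) together with a weight function $w:A(D)\to\mathbb{R}_{\ge 0}$; for a subgraph $H$, $w(H)$ is the sum of the weights of its arcs. For a partition $(X,Y)$ of $V(D)$, the directed cut (dicut) $(X,Y)$ consists of the arcs going from $X$ to $Y$, and $w(X,Y)$ is their total weight. $\mathrm{mac}(D)$ is the maximum of $w(X,Y)$ over all partitions $(X,Y)$ of $V(D)$. For a weighted undirected graph $G$, $\mathrm{mac}(G)$ is the maximum total weight of edges with one end in $X$ and the other in $Y$, over partitions $(X,Y)$ of $V(G)$. The underlying graph $UG(D)$ has vertex set $V(D)$, with $x,y$ adjacent iff there is an arc between them; the edge weight is $w(xy)$ if only $xy\in A(D)$ and $w(xy)+w(yx)$ if both $xy,yx\in A(D)$. For $v\in V(D)$, $w^+(v)$ ($w^-(v)$) is the total weight of arcs leaving (entering) $v$, $r(v)=w^+(v)-w^-(v)$, and $r^+(D)=\sum_{r(x)>0}r(x)=\frac12\sum_{x\in V(D)}|r(x)|$. *)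

theory Defs
  imports Complex_Main
begin

text \<open>A weighted digraph is given by a finite vertex set V, an arc set A \<subseteq> V \<times> V
  without loops (a set of ordered pairs, so no parallel arcs; opposite arcs allowed),
  and a weight function w on arcs with nonnegative values on A.\<close>

definition weighted_digraph :: "'a set \<Rightarrow> ('a \<times> 'a) set \<Rightarrow> ('a \<times> 'a \<Rightarrow> real) \<Rightarrow> bool" where
  "weighted_digraph V A w \<longleftrightarrow> finite V \<and> A \<subseteq> V \<times> V \<and> (\<forall>x. (x, x) \<notin> A) \<and> (\<forall>a\<in>A. 0 \<le> w a)"

definition total_weight :: "('a \<times> 'a) set \<Rightarrow> ('a \<times> 'a \<Rightarrow> real) \<Rightarrow> real" where
  "total_weight A w = (\<Sum>a\<in>A. w a)"

definition dicut_weight :: "('a \<times> 'a) set \<Rightarrow> ('a \<times> 'a \<Rightarrow> real) \<Rightarrow> 'a set \<Rightarrow> 'a set \<Rightarrow> real" where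
  "dicut_weight A w X Y = (\<Sum>a\<in>{(x, y) \<in> A. x \<in> X \<and> y \<in> Y}. w a)"

definition mac_D :: "'a set \<Rightarrow> ('a \<times> 'a) set \<Rightarrow> ('a \<times> 'a \<Rightarrow> real) \<Rightarrow> real" where
  "mac_D V A w = Max {dicut_weight A w X (V - X) | X. X \<subseteq> V}"

definition min_dicut :: "'a set \<Rightarrow> ('a \<times> 'a) set \<Rightarrow> ('a \<times> 'a \<Rightarrow> real) \<Rightarrow> real" where
  "min_dicut V A w = Min {dicut_weight A w X (V - X) | X. X \<subseteq> V \<and> X \<noteq> {} \<and> X \<noteq> V}"

definition out_weight :: "('a \<times> 'a) set \<Rightarrow> ('a \<times> 'a \<Rightarrow> real) \<Rightarrow> 'a \<Rightarrow> real" where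
  "out_weight A w v = (\<Sum>a\<in>{a \<in> A. fst a = v}. w a)"

definition in_weight :: "('a \<times> 'a) set \<Rightarrow> ('a \<times> 'a \<Rightarrow> real) \<Rightarrow> 'a \<Rightarrow> real" where
  "in_weight A w v = (\<Sum>a\<in>{a \<in> A. snd a = v}. w a)"

definition r_val :: "('a \<times> 'a) set \<Rightarrow> ('a \<times> 'a \<Rightarrow> real) \<Rightarrow> 'a \<Rightarrow> real" where
  "r_val A w v = out_weight A w v - in_weight A w v"

definition r_plus :: "'a set \<Rightarrow> ('a \<times> 'a) set \<Rightarrow> ('a \<times> 'a \<Rightarrow> real) \<Rightarrow> real" where
  "r_plus V A w = (\<Sum>v\<in>{v \<in> V. r_val A w v > 0}. r_val A w v)"

definition ug_edges :: "('a \<times> 'a) set \<Rightarrow> 'a set set" where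
  "ug_edges A = {{x, y} | x y. (x, y) \<in> A}"

definition ug_weight :: "('a \<times> 'a) set \<Rightarrow> ('a \<times> 'a \<Rightarrow> real) \<Rightarrow> 'a set \<Rightarrow> real" where
  "ug_weight A w e = (\<Sum>a\<in>{(x, y) \<in> A. {x, y} = e}. w a)"

definition ug_adj :: "('a \<times> 'a) set \<Rightarrow> 'a \<Rightarrow> 'a \<Rightarrow> bool" where
  "ug_adj A x y \<longleftrightarrow> {x, y} \<in> ug_edges A"

definition ug_cut_weight :: "'a set \<Rightarrow> ('a \<times> 'a) set \<Rightarrow> ('a \<times> 'a \<Rightarrow> real) \<Rightarrow> 'a set \<Rightarrow> real" where
  "ug_cut_weight V A w X = (\<Sum>e\<in>{e \<in> ug_edges A. e \<inter> X \<noteq> {} \<and> e \<inter> (V - X) \<noteq> {}}. ug_weight A w e)"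

definition mac_UG :: "'a set \<Rightarrow> ('a \<times> 'a) set \<Rightarrow> ('a \<times> 'a \<Rightarrow> real) \<Rightarrow> real" where
  "mac_UG V A w = Max {ug_cut_weight V A w X | X. X \<subseteq> V}"

definition proper_colouring :: "'a set \<Rightarrow> ('a \<times> 'a) set \<Rightarrow> ('a \<Rightarrow> nat) \<Rightarrow> nat \<Rightarrow> bool" where
  "proper_colouring V A c k \<longleftrightarrow> (\<forall>v\<in>V. c v < k) \<and> (\<forall>x\<in>V. \<forall>y\<in>V. ug_adj A x y \<longrightarrow> c x \<noteq> c y)"

definition chromatic_number :: "'a set \<Rightarrow> ('a \<times> 'a) set \<Rightarrow> nat" where
  "chromatic_number V A = (LEAST k. \<exists>c. proper_colouring V A c k)"

end

theory Submission
  imports Defs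
begin

text \<open>For X \<subseteq> V the arcs inside X or inside V - X cancel in \<Sum>x\<in>X. r(x), so
  w(X, V - X) - w(V - X, X) = \<Sum>x\<in>X. r(x) \<le> r+(D), while w(X, V - X) + w(V - X, X) is the
  weight of the cut X in UG(D).  Combining the two identities gives (b) and (c); for the set P of
  vertices with r > 0 the first one reads w(P, V - P) = r+(D) + w(V - P, P), which gives (a).
  For (d) take a proper colouring with \<chi> colours and m = \<lfloor>\<chi>/2\<rfloor>: averaging the cut of UG(D)
  between the vertices with colour in S and the rest over all m-sets S of colours yields a cut
  of weight at least 2m(\<chi>-m)/(\<chi>(\<chi>-1)) w(D), and mac(D) \<ge> mac(G)/2.\<close>

lemma dicut_weight_eq_sum_if:
  "finite A \<Longrightarrow> dicut_weight A w X Y = (\<Sum>a\<in>A. if fst a \<in> X \<and> snd a \<in> Y then w a else 0)"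
proof -
  assume "finite A"
  moreover have "{(x, y) \<in> A. x \<in> X \<and> y \<in> Y} = {a \<in> A. fst a \<in> X \<and> snd a \<in> Y}"
    by auto
  ultimately show ?thesis unfolding dicut_weight_def by (simp add: sum.inter_filter)
qed

lemma sum_r_val_eq:
  assumes "finite A" "finite X"
  shows "(\<Sum>x\<in>X. r_val A w x)
    = (\<Sum>a\<in>A. (if fst a \<in> X then w a else 0) - (if snd a \<in> X then w a else 0))"
proof -
  have "(\<Sum>x\<in>X. r_val A w x)
      = (\<Sum>x\<in>X. \<Sum>a\<in>A. (if fst a = x then w a else 0) - (if snd a = x then w a else 0))"
    unfolding r_val_def out_weight_def in_weight_def
    using assms by (simp add: sum.inter_filter sum_subtractf)
  also have "\<dots> = (\<Sum>a\<in>A. \<Sum>x\<in>X. (if fst a = x then w a else 0) - (if snd a = x then w a else 0))"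
    by (rule sum.swap)
  also have "\<dots> = (\<Sum>a\<in>A. (if fst a \<in> X then w a else 0) - (if snd a \<in> X then w a else 0))"
    using assms by (simp add: sum_subtractf)
  finally show ?thesis .
qed

lemma weighted_digraph_finite:
  assumes "weighted_digraph V A w"
  shows "finite V" "finite A"
  using assms finite_subset[of A "V \<times> V"] unfolding weighted_digraph_def by auto

lemma dicut_weight_nonneg: "weighted_digraph V A w \<Longrightarrow> 0 \<le> dicut_weight A w X Y"
  unfolding dicut_weight_def weighted_digraph_def by (intro sum_nonneg) auto

lemma dicut_weight_diff_eq_sum_r_val:
  assumes D: "weighted_digraph V A w" and X: "X \<subseteq> V"
  shows "dicut_weight A w X (V - X) - dicut_weight A w (V - X) X = (\<Sum>x\<in>X. r_val A w x)"
proof -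
  have fA: "finite A" and fX: "finite X"
    using weighted_digraph_finite[OF D] X finite_subset by auto
  have "A \<subseteq> V \<times> V" using D unfolding weighted_digraph_def by simp
  then show ?thesis
    unfolding dicut_weight_eq_sum_if[OF fA] sum_r_val_eq[OF fA fX] sum_subtractf[symmetric]
    using X by (intro sum.cong) auto
qed

lemma ug_cut_weight_eq_dicuts:
  assumes D: "weighted_digraph V A w" and X: "X \<subseteq> V"
  shows "ug_cut_weight V A w X = dicut_weight A w X (V - X) + dicut_weight A w (V - X) X"
proof -
  have fA: "finite A" using weighted_digraph_finite[OF D] by simp
  have AV: "A \<subseteq> V \<times> V" using D unfolding weighted_digraph_def by simp
  define cut where "cut e \<longleftrightarrow> e \<inter> X \<noteq> {} \<and> e \<inter> (V - X) \<noteq> {}" for e :: "'a set"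
  define ends where "ends a = {fst a, snd a}" for a :: "'a \<times> 'a"
  define A' where "A' = {a\<in>A. cut (ends a)}"
  have "ends ` A' = {e \<in> ug_edges A. cut e}"
    unfolding A'_def ends_def ug_edges_def by force
  moreover have "{a \<in> A'. ends a = e} = {(x, y) \<in> A. {x, y} = e}" if "cut e" for e
    using that unfolding A'_def ends_def by auto
  ultimately have "ug_cut_weight V A w X = (\<Sum>e\<in>ends ` A'. \<Sum>a\<in>{a \<in> A'. ends a = e}. w a)"
    unfolding ug_cut_weight_def ug_weight_def cut_def[symmetric] by (intro sum.cong) auto
  also have "\<dots> = (\<Sum>a\<in>A'. w a)"
    using fA unfolding A'_def by (intro sum.image_gen[symmetric]) simp
  also have "\<dots> = (\<Sum>a\<in>A. if cut (ends a) then w a else 0)"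
    using fA by (simp add: A'_def sum.inter_filter)
  also have "\<dots> = dicut_weight A w X (V - X) + dicut_weight A w (V - X) X"
    unfolding dicut_weight_eq_sum_if[OF fA] sum.distrib[symmetric]
    using AV by (intro sum.cong) (auto simp: cut_def ends_def)
  finally show ?thesis .
qed

lemma mac_D_ge:
  assumes "weighted_digraph V A w" "X \<subseteq> V"
  shows "dicut_weight A w X (V - X) \<le> mac_D V A w"
  unfolding mac_D_def using assms weighted_digraph_finite[OF assms(1)]
  by (intro Max_ge) auto

lemma mac_D_attained:
  assumes "weighted_digraph V A w"
  obtains X where "X \<subseteq> V" "mac_D V A w = dicut_weight A w X (V - X)"
proof -
  have "{dicut_weight A w X (V - X) | X. X \<subseteq> V} = (\<lambda>X. dicut_weight A w X (V - X)) ` Pow V"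
    by auto
  then have "mac_D V A w \<in> (\<lambda>X. dicut_weight A w X (V - X)) ` Pow V"
    unfolding mac_D_def using weighted_digraph_finite[OF assms] by (auto intro: Max_in)
  then show ?thesis using that by auto
qed

lemma mac_UG_ge:
  assumes "weighted_digraph V A w" "X \<subseteq> V"
  shows "ug_cut_weight V A w X \<le> mac_UG V A w"
  unfolding mac_UG_def using assms weighted_digraph_finite[OF assms(1)]
  by (intro Max_ge) auto

lemma mac_UG_attained:
  assumes "weighted_digraph V A w"
  obtains X where "X \<subseteq> V" "mac_UG V A w = ug_cut_weight V A w X"
proof -
  have "{ug_cut_weight V A w X | X. X \<subseteq> V} = ug_cut_weight V A w ` Pow V"
    by auto
  then have "mac_UG V A w \<in> ug_cut_weight V A w ` Pow V"
    unfolding mac_UG_def using weighted_digraph_finite[OF assms] by (auto intro: Max_in)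
  then show ?thesis using that by auto
qed

lemma sum_r_val_le_r_plus:
  assumes D: "weighted_digraph V A w" and X: "X \<subseteq> V"
  shows "(\<Sum>x\<in>X. r_val A w x) \<le> r_plus V A w"
proof -
  let ?P = "{v \<in> V. r_val A w v > 0}"
  have fV: "finite V" and fX: "finite X"
    using weighted_digraph_finite[OF D] X finite_subset by auto
  have "(\<Sum>x\<in>X. r_val A w x) = (\<Sum>x\<in>X \<inter> ?P. r_val A w x) + (\<Sum>x\<in>X - ?P. r_val A w x)"
    using fX by (metis sum.Int_Diff)
  also have "(\<Sum>x\<in>X - ?P. r_val A w x) \<le> 0"
    using X by (intro sum_nonpos) auto
  also have "(\<Sum>x\<in>X \<inter> ?P. r_val A w x) \<le> (\<Sum>x\<in>?P. r_val A w x)"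
    using fV by (intro sum_mono2) auto
  finally show ?thesis unfolding r_plus_def by simp
qed

lemma r_plus_eq_dicut_weight_diff:
  assumes "weighted_digraph V A w" and "P = {v \<in> V. r_val A w v > 0}"
  shows "r_plus V A w = dicut_weight A w P (V - P) - dicut_weight A w (V - P) P"
  unfolding r_plus_def assms(2) by (subst dicut_weight_diff_eq_sum_r_val[OF assms(1)]) auto

lemma min_dicut_le:
  assumes "weighted_digraph V A w" "X \<subseteq> V" "X \<noteq> {}" "X \<noteq> V"
  shows "min_dicut V A w \<le> dicut_weight A w X (V - X)"
proof -
  have "{dicut_weight A w X (V - X) | X. X \<subseteq> V \<and> X \<noteq> {} \<and> X \<noteq> V}
      \<subseteq> (\<lambda>X. dicut_weight A w X (V - X)) ` Pow V"
    by auto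
  then show ?thesis
    unfolding min_dicut_def using assms weighted_digraph_finite[OF assms(1)]
    by (intro Min_le) (auto intro: finite_subset)
qed

lemma r_plus_le_mac_D:
  assumes D: "weighted_digraph V A w"
  shows "r_plus V A w \<le> mac_D V A w"
proof -
  define P where "P = {v \<in> V. r_val A w v > 0}"
  have "P \<subseteq> V" unfolding P_def by auto
  then show ?thesis
    using r_plus_eq_dicut_weight_diff[OF D P_def] mac_D_ge[OF D, of P]
      dicut_weight_nonneg[OF D, of "V - P" P] by simp
qed

lemma r_plus_add_min_dicut_le_mac_D:
  assumes D: "weighted_digraph V A w" and two: "card V \<ge> 2"
  shows "r_plus V A w + min_dicut V A w \<le> mac_D V A w"
proof -
  define P where "P = {v \<in> V. r_val A w v > 0}"
  have PV: "P \<subseteq> V" unfolding P_def by auto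
  have fV: "finite V" using weighted_digraph_finite[OF D] by simp
  consider "P = {}" | "P = V" | "P \<noteq> {}" "P \<noteq> V" by blast
  then show ?thesis
  proof cases
    case 1
    then have "r_plus V A w = 0" unfolding r_plus_def P_def[symmetric] by simp
    obtain x where x: "x \<in> V" using two by fastforce
    have "{x} \<noteq> V" using two by auto
    then have "min_dicut V A w \<le> dicut_weight A w {x} (V - {x})"
      using x by (intro min_dicut_le[OF D]) auto
    also have "\<dots> \<le> mac_D V A w" using mac_D_ge[OF D, of "{x}"] x by simp
    finally show ?thesis using \<open>r_plus V A w = 0\<close> by simp
  next
    case 2
    \<comment> \<open>impossible: the surpluses sum to zero over V\<close>
    have "(\<Sum>x\<in>V. r_val A w x) = 0"
      using dicut_weight_diff_eq_sum_r_val[OF D, of V] unfolding dicut_weight_def by simp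
    moreover have "V \<noteq> {}" using two by auto
    then have "(\<Sum>x\<in>V. r_val A w x) > 0"
      using 2 fV by (intro sum_pos) (auto simp: P_def)
    ultimately show ?thesis by simp
  next
    case 3
    have "min_dicut V A w \<le> dicut_weight A w (V - P) (V - (V - P))"
      using 3 PV by (intro min_dicut_le[OF D]) auto
    moreover have "V - (V - P) = P" using PV by auto
    ultimately show ?thesis
      using r_plus_eq_dicut_weight_diff[OF D P_def] mac_D_ge[OF D PV] by simp
  qed
qed

lemma mac_UG_half_le_mac_D:
  assumes D: "weighted_digraph V A w"
  shows "mac_UG V A w / 2 \<le> mac_D V A w"
proof -
  obtain X where X: "X \<subseteq> V" "mac_UG V A w = ug_cut_weight V A w X"
    using mac_UG_attained[OF D] .
  have "V - (V - X) = X" using X by auto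
  then show ?thesis
    using X ug_cut_weight_eq_dicuts[OF D X(1)] mac_D_ge[OF D X(1)] mac_D_ge[OF D, of "V - X"]
    by auto
qed

lemma mac_D_le_mac_UG_r_plus:
  assumes D: "weighted_digraph V A w"
  shows "mac_D V A w \<le> (mac_UG V A w + r_plus V A w) / 2"
proof -
  obtain X where X: "X \<subseteq> V" "mac_D V A w = dicut_weight A w X (V - X)"
    using mac_D_attained[OF D] .
  show ?thesis
    using X dicut_weight_diff_eq_sum_r_val[OF D X(1)] sum_r_val_le_r_plus[OF D X(1)]
      ug_cut_weight_eq_dicuts[OF D X(1)] mac_UG_ge[OF D X(1)]
    by simp
qed

lemma card_subsets_containing_avoiding:
  assumes "i < n" "j < n" "i \<noteq> j" "1 \<le> m"
  shows "card {S. S \<subseteq> {0..<n} \<and> card S = m \<and> i \<in> S \<and> j \<notin> S} = (n - 2) choose (m - 1)"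
proof -
  let ?T = "{T. T \<subseteq> {0..<n} - {i, j} \<and> card T = m - 1}"
  have "{S. S \<subseteq> {0..<n} \<and> card S = m \<and> i \<in> S \<and> j \<notin> S} = insert i ` ?T"
  proof (intro set_eqI iffI)
    fix S assume S: "S \<in> {S. S \<subseteq> {0..<n} \<and> card S = m \<and> i \<in> S \<and> j \<notin> S}"
    then have "S - {i} \<in> ?T" using finite_subset[of S "{0..<n}"] by auto
    moreover have "S = insert i (S - {i})" using S by auto
    ultimately show "S \<in> insert i ` ?T" by blast
  next
    fix S assume "S \<in> insert i ` ?T"
    then obtain T where T: "T \<in> ?T" "S = insert i T" by blast
    then have "finite T" "i \<notin> T" using finite_subset[of T "{0..<n}"] by auto
    then show "S \<in> {S. S \<subseteq> {0..<n} \<and> card S = m \<and> i \<in> S \<and> j \<notin> S}"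
      using T assms by auto
  qed
  moreover have "inj_on (insert i) ?T"
    by (rule inj_onI) (metis Diff_iff insert_absorb insert_ident insertCI mem_Collect_eq subsetD)
  moreover have "card ({0..<n} - {i, j}) = n - 2" using assms by (simp add: card_Diff_subset)
  ultimately show ?thesis by (simp add: card_image n_subsets)
qed

lemma proper_colouring_arc:
  assumes D: "weighted_digraph V A w" and c: "proper_colouring V A c n" and a: "a \<in> A"
  shows "c (fst a) < n" "c (snd a) < n" "c (fst a) \<noteq> c (snd a)"
proof -
  have "fst a \<in> V" "snd a \<in> V" using D a unfolding weighted_digraph_def by auto
  moreover have "ug_adj A (fst a) (snd a)"
    using a unfolding ug_adj_def ug_edges_def by (cases a) auto
  ultimately show "c (fst a) < n" "c (snd a) < n" "c (fst a) \<noteq> c (snd a)"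
    using c unfolding proper_colouring_def by auto
qed

text \<open>An arc whose ends have colours i \<noteq> j is cut by the colour set S iff exactly one of i, j
  lies in S, which happens for 2 \<cdot> C(n-2, m-1) of the m-sets S.\<close>

lemma sum_colour_class_cuts:
  assumes D: "weighted_digraph V A w" and c: "proper_colouring V A c n" and m: "1 \<le> m"
  shows "(\<Sum>S | S \<subseteq> {0..<n} \<and> card S = m. ug_cut_weight V A w {v \<in> V. c v \<in> S})
    = 2 * real ((n - 2) choose (m - 1)) * total_weight A w"
proof -
  have fA: "finite A" using weighted_digraph_finite[OF D] by simp
  have AV: "A \<subseteq> V \<times> V" using D unfolding weighted_digraph_def by simp
  define SS where "SS = {S. S \<subseteq> {0..<n} \<and> card S = m}"
  have fSS: "finite SS" unfolding SS_def by simp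
  define sep where "sep i j S \<longleftrightarrow> i \<in> S \<and> j \<notin> S" for i j :: nat and S
  have cut_eq: "ug_cut_weight V A w {v \<in> V. c v \<in> S}
      = (\<Sum>a\<in>A. (if sep (c (fst a)) (c (snd a)) S then w a else 0)
                + (if sep (c (snd a)) (c (fst a)) S then w a else 0))" for S
    unfolding ug_cut_weight_eq_dicuts[OF D, of "{v \<in> V. c v \<in> S}", simplified]
      dicut_weight_eq_sum_if[OF fA] sum.distrib[symmetric]
    using AV by (intro sum.cong) (auto simp: sep_def)
  have count: "(\<Sum>S\<in>SS. if sep i j S then x else 0) = real ((n - 2) choose (m - 1)) * x"
    if "i < n" "j < n" "i \<noteq> j" for i j and x :: real
  proof -
    have "{S\<in>SS. sep i j S} = {S. S \<subseteq> {0..<n} \<and> card S = m \<and> i \<in> S \<and> j \<notin> S}"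
      unfolding SS_def sep_def by auto
    then show ?thesis
      using that m card_subsets_containing_avoiding[of i n j m]
      by (simp add: sum.inter_filter[OF fSS, symmetric])
  qed
  have "(\<Sum>S\<in>SS. ug_cut_weight V A w {v \<in> V. c v \<in> S})
      = (\<Sum>a\<in>A. \<Sum>S\<in>SS. (if sep (c (fst a)) (c (snd a)) S then w a else 0)
                + (if sep (c (snd a)) (c (fst a)) S then w a else 0))"
    unfolding cut_eq by (rule sum.swap)
  also have "\<dots> = (\<Sum>a\<in>A. 2 * real ((n - 2) choose (m - 1)) * w a)"
  proof (intro sum.cong refl)
    fix a assume "a \<in> A"
    note arc = proper_colouring_arc[OF D c this]
    show "(\<Sum>S\<in>SS. (if sep (c (fst a)) (c (snd a)) S then w a else 0)
                + (if sep (c (snd a)) (c (fst a)) S then w a else 0))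
        = 2 * real ((n - 2) choose (m - 1)) * w a"
      using count[OF arc] count[OF arc(2,1) arc(3)[symmetric]] by (simp add: sum.distrib)
  qed
  finally show ?thesis unfolding SS_def total_weight_def by (simp add: sum_distrib_left)
qed

lemma binomial_mult_complement:
  assumes "1 \<le> m" "m < n"
  shows "m * (n - m) * (n choose m) = n * (n - 1) * ((n - 2) choose (m - 1))"
proof -
  obtain k where k: "m = Suc k" using assms(1) by (cases m) auto
  have "m * (n - m) * (n choose m) = (n - 1 - k) * (Suc k * (n choose Suc k))"
    unfolding k by (simp only: diff_Suc_eq_diff_pred ac_simps)
  also have "\<dots> = n * ((n - 1 - k) * ((n - 1) choose k))"
    by (simp only: binomial_absorption ac_simps)
  also have "\<dots> = n * (n - 1) * ((n - 2) choose (m - 1))"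
    unfolding k binomial_absorb_comp by (simp add: numeral_2_eq_2)
  finally show ?thesis .
qed

lemma mac_D_ge_colouring_fraction:
  assumes D: "weighted_digraph V A w" and c: "proper_colouring V A c n" and m: "1 \<le> m" "m < n"
  shows "real (m * (n - m)) / real (n * (n - 1)) * total_weight A w \<le> mac_D V A w"
proof -
  let ?SS = "{S. S \<subseteq> {0..<n} \<and> card S = m}"
  let ?W = "total_weight A w" and ?M = "mac_D V A w"
  have "ug_cut_weight V A w X \<le> 2 * ?M" if "X \<subseteq> V" for X
    using mac_UG_ge[OF D that] mac_UG_half_le_mac_D[OF D] by linarith
  then have "(\<Sum>S\<in>?SS. ug_cut_weight V A w {v \<in> V. c v \<in> S}) \<le> (\<Sum>S\<in>?SS. 2 * ?M)"
    by (intro sum_mono) auto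
  then have colour_avg: "real ((n - 2) choose (m - 1)) * ?W \<le> real (n choose m) * ?M"
    unfolding sum_colour_class_cuts[OF D c m(1)] by (simp add: n_subsets)
  have "real (n choose m) * real (m * (n - m)) = real (n * (n - 1)) * real ((n - 2) choose (m - 1))"
    by (metis binomial_mult_complement[OF m] mult.commute of_nat_mult)
  then have "real (n choose m) * (real (m * (n - m)) * ?W)
      = real (n * (n - 1)) * (real ((n - 2) choose (m - 1)) * ?W)"
    by (metis mult.assoc)
  also have "\<dots> \<le> real (n * (n - 1)) * (real (n choose m) * ?M)"
    using colour_avg by (intro mult_left_mono) auto
  finally have "real (n choose m) * (real (m * (n - m)) * ?W)
      \<le> real (n choose m) * (real (n * (n - 1)) * ?M)"
    by (simp only: ac_simps)
  then have "real (m * (n - m)) * ?W \<le> ?M * real (n * (n - 1))"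
    using m by (simp only: mult_le_cancel_left_pos zero_less_binomial_iff of_nat_0_less_iff mult.commute)
  moreover have "real (n * (n - 1)) > 0" using m by simp
  ultimately show ?thesis by (simp only: times_divide_eq_left pos_divide_le_eq)
qed

lemma proper_colouring_chromatic_number:
  assumes D: "weighted_digraph V A w"
  obtains c where "proper_colouring V A c (chromatic_number V A)"
proof -
  obtain h where h: "bij_betw h V {0..<card V}"
    using ex_bij_betw_finite_nat weighted_digraph_finite(1)[OF D] by blast
  have "x \<noteq> y" if "ug_adj A x y" for x y
    using that D unfolding ug_adj_def ug_edges_def weighted_digraph_def
    by (auto simp: doubleton_eq_iff)
  then have "proper_colouring V A h (card V)"
    using h unfolding proper_colouring_def bij_betw_def inj_on_def by auto
  then have "\<exists>c. proper_colouring V A c (chromatic_number V A)"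
    unfolding chromatic_number_def by (intro LeastI) blast
  then show ?thesis using that by blast
qed

lemma chromatic_number_ge_2:
  assumes D: "weighted_digraph V A w" and "A \<noteq> {}"
  shows "2 \<le> chromatic_number V A"
proof -
  obtain c where c: "proper_colouring V A c (chromatic_number V A)"
    using proper_colouring_chromatic_number[OF D] .
  obtain a where "a \<in> A" using assms(2) by blast
  from proper_colouring_arc[OF D c this] show ?thesis by linarith
qed

lemma mac_D_nonneg: "weighted_digraph V A w \<Longrightarrow> 0 \<le> mac_D V A w"
  using mac_D_ge[of V A w "{}"] dicut_weight_nonneg[of V A w "{}" V] by simp

lemma mac_D_ge_chromatic_even:
  assumes D: "weighted_digraph V A w" and even: "even (chromatic_number V A)"
  shows "(1/4 + 1 / (4 * (real (chromatic_number V A) - 1))) * total_weight A w \<le> mac_D V A w"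
proof (cases "A = {}")
  case True
  then show ?thesis using mac_D_nonneg[OF D] by (simp add: total_weight_def)
next
  case False
  define n where "n = chromatic_number V A"
  obtain c where c: "proper_colouring V A c n"
    using proper_colouring_chromatic_number[OF D] unfolding n_def .
  obtain k where k: "n = 2 * k" using even unfolding n_def by blast
  have "1 \<le> k" "k < n" using k chromatic_number_ge_2[OF D False] unfolding n_def by auto
  moreover have "real (k * (n - k)) / real (n * (n - 1)) = 1/4 + 1 / (4 * (real n - 1))"
    using k \<open>1 \<le> k\<close> by (simp add: of_nat_diff field_simps)
  ultimately show ?thesis
    using mac_D_ge_colouring_fraction[OF D c] unfolding n_def by metis
qed

lemma mac_D_ge_chromatic_odd:
  assumes D: "weighted_digraph V A w" and odd: "odd (chromatic_number V A)"
  shows "(1/4 + 1 / (4 * real (chromatic_number V A))) * total_weight A w \<le> mac_D V A w"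
proof (cases "A = {}")
  case True
  then show ?thesis using mac_D_nonneg[OF D] by (simp add: total_weight_def)
next
  case False
  define n where "n = chromatic_number V A"
  obtain c where c: "proper_colouring V A c n"
    using proper_colouring_chromatic_number[OF D] unfolding n_def .
  obtain k where k: "n = 2 * k + 1" using odd oddE unfolding n_def by blast
  have "1 \<le> k" "k < n" using k chromatic_number_ge_2[OF D False] unfolding n_def by auto
  moreover have "real (k * (n - k)) / real (n * (n - 1)) = 1/4 + 1 / (4 * real n)"
  proof -
    have num: "real (k * (n - k)) = real k * (real k + 1)"
      and den: "real (n * (n - 1)) = (2 * real k + 1) * (2 * real k)"
      using k by (simp_all add: algebra_simps)
    have "real (k * (n - k)) / real (n * (n - 1))
        = real k * (real k + 1) / ((2 * real k + 1) * (2 * real k))"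
      unfolding num den ..
    also have "\<dots> = 1/4 + 1 / (4 * (2 * real k + 1))"
      using \<open>1 \<le> k\<close> by (simp add: divide_simps) (simp add: algebra_simps)
    finally show ?thesis using k by simp
  qed
  ultimately show ?thesis
    using mac_D_ge_colouring_fraction[OF D c] unfolding n_def by metis
qed

theorem mainTheorem1:
  fixes V :: "'a set" and A :: "('a \<times> 'a) set" and w :: "'a \<times> 'a \<Rightarrow> real"
  assumes D: "weighted_digraph V A w"
  shows "(card V \<ge> 2 \<longrightarrow> r_plus V A w + min_dicut V A w \<le> mac_D V A w)
    \<and> (mac_UG V A w / 2 \<le> mac_D V A w \<and> mac_D V A w \<le> (mac_UG V A w + r_plus V A w) / 2)
    \<and> ((mac_UG V A w / 2 + r_plus V A w) / 2 \<le> mac_D V A w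
        \<and> mac_D V A w \<le> (mac_UG V A w + r_plus V A w) / 2)
    \<and> (even (chromatic_number V A) \<longrightarrow>
         (1/4 + 1 / (4 * (real (chromatic_number V A) - 1))) * total_weight A w \<le> mac_D V A w)
    \<and> (odd (chromatic_number V A) \<longrightarrow>
         (1/4 + 1 / (4 * real (chromatic_number V A))) * total_weight A w \<le> mac_D V A w)"
  using r_plus_add_min_dicut_le_mac_D[OF D] mac_UG_half_le_mac_D[OF D]
    mac_D_le_mac_UG_r_plus[OF D] r_plus_le_mac_D[OF D]
    mac_D_ge_chromatic_even[OF D] mac_D_ge_chromatic_odd[OF D]
  by auto

end
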